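(* Let $n\ge1$, $1\le q,q_1,q_2\le\infty$ and $s,s_1,s_2\in\mathbb{R}$. If $L(q_1,s_1)\ast L(q_2,s_2)\subset L(q,s)$, then $l(q_1,s_1)\ast l(q_2,s_2)\subset l(q,s)$.
   Context: $\langle x\rangle=(1+|x|^2)^{1/2}$. For $1\le p\le\infty$, $s\in\mathbb{R}$: $L(p,s)$ is the space of measurable $f$ on $\mathbb{R}^n$ with $\|f\|_{L(p,s)}=\big(\int|f(x)|^p\langle x\rangle^{ps}dx\big)^{1/p}<\infty$ (ess sup of $|f(x)|\langle x\rangle^s$ if $p=\infty$); $l(p,s)$ is the space of $a:\mathbb{Z}^n\to\mathbb{C}$ with $\|a\|_{l(p,s)}=\big(\sum_k|a(k)|^p\langle k\rangle^{ps}\big)^{1/p}<\infty$ (sup of $|a(k)|\langle k\rangle^s$ if $p=\infty$). Convolutions: $(f\ast g)(x)=\int f(x-y)g(y)dy$ on $\mathbb{R}^n$ and $(a\ast b)(k)=\sum_j a(k-j)b(j)$ on $\mathbb{Z}^n$. "$X\ast Y\subset Z$" means there is $C$ with $f\ast g\in Z$ and $\|f\ast g\|_Z\le C\|f\|_X\|g\|_Y$ for all $f\in X$, $g\in Y$. *)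

theory Defs
  imports "HOL-Analysis.Analysis"
begin

definition jb :: "real^'n \<Rightarrow> real" where
  "jb x = sqrt (1 + (norm x)^2)"

definition jbZ :: "int^'n \<Rightarrow> real" where
  "jbZ k = jb (\<chi> i. real_of_int (k $ i))"

text \<open>Exponents p in [1,infinity] are represented as ennreal values.\<close>

definition inL :: "ennreal \<Rightarrow> real \<Rightarrow> (real^'n \<Rightarrow> complex) \<Rightarrow> bool" where
  "inL p s f \<longleftrightarrow> f \<in> borel_measurable lebesgue \<and>
     (if p = \<infinity> then (\<exists>C. AE x in lebesgue. cmod (f x) * jb x powr s \<le> C)
      else (\<integral>\<^sup>+ x. ennreal (cmod (f x) powr enn2real p * jb x powr (enn2real p * s)) \<partial>lebesgue) < \<infinity>)"

definition normL :: "ennreal \<Rightarrow> real \<Rightarrow> (real^'n \<Rightarrow> complex) \<Rightarrow> real" where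
  "normL p s f =
     (if p = \<infinity> then Inf {C. AE x in lebesgue. cmod (f x) * jb x powr s \<le> C}
      else enn2real (\<integral>\<^sup>+ x. ennreal (cmod (f x) powr enn2real p * jb x powr (enn2real p * s)) \<partial>lebesgue)
             powr (1 / enn2real p))"

definition inl :: "ennreal \<Rightarrow> real \<Rightarrow> (int^'n \<Rightarrow> complex) \<Rightarrow> bool" where
  "inl p s a \<longleftrightarrow>
     (if p = \<infinity> then bdd_above (range (\<lambda>k. cmod (a k) * jbZ k powr s))
      else (\<lambda>k. cmod (a k) powr enn2real p * jbZ k powr (enn2real p * s)) summable_on UNIV)"

definition norml :: "ennreal \<Rightarrow> real \<Rightarrow> (int^'n \<Rightarrow> complex) \<Rightarrow> real" where
  "norml p s a =
     (if p = \<infinity> then (SUP k. cmod (a k) * jbZ k powr s)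
      else (\<Sum>\<^sub>\<infinity>k. cmod (a k) powr enn2real p * jbZ k powr (enn2real p * s)) powr (1 / enn2real p))"

definition convR :: "(real^'n \<Rightarrow> complex) \<Rightarrow> (real^'n \<Rightarrow> complex) \<Rightarrow> real^'n \<Rightarrow> complex" where
  "convR f g x = (\<integral> y. f (x - y) * g y \<partial>lebesgue)"

definition convZ :: "(int^'n \<Rightarrow> complex) \<Rightarrow> (int^'n \<Rightarrow> complex) \<Rightarrow> int^'n \<Rightarrow> complex" where
  "convZ a b k = (\<Sum>\<^sub>\<infinity>j. a (k - j) * b j)"

definition L_conv_incl :: "'n::finite itself \<Rightarrow> ennreal \<Rightarrow> real \<Rightarrow> ennreal \<Rightarrow> real \<Rightarrow> ennreal \<Rightarrow> real \<Rightarrow> bool" where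
  "L_conv_incl _ p1 s1 p2 s2 q s \<longleftrightarrow>
     (\<exists>C. \<forall>(f::real^'n \<Rightarrow> complex) g. inL p1 s1 f \<longrightarrow> inL p2 s2 g \<longrightarrow>
        (AE x in lebesgue. integrable lebesgue (\<lambda>y. f (x - y) * g y)) \<and>
        inL q s (convR f g) \<and>
        normL q s (convR f g) \<le> C * normL p1 s1 f * normL p2 s2 g)"

definition l_conv_incl :: "'n::finite itself \<Rightarrow> ennreal \<Rightarrow> real \<Rightarrow> ennreal \<Rightarrow> real \<Rightarrow> ennreal \<Rightarrow> real \<Rightarrow> bool" where
  "l_conv_incl _ p1 s1 p2 s2 q s \<longleftrightarrow>
     (\<exists>C. \<forall>(a::int^'n \<Rightarrow> complex) b. inl p1 s1 a \<longrightarrow> inl p2 s2 b \<longrightarrow>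
        (\<forall>k. (\<lambda>j. a (k - j) * b j) summable_on UNIV) \<and>
        inl q s (convZ a b) \<and>
        norml q s (convZ a b) \<le> C * norml p1 s1 a * norml p2 s2 b)"

end

theory Submission
  imports Defs
begin

text \<open>Extend a lattice function \<open>a\<close> to the step function \<open>x \<mapsto> \<bar>a \<lfloor>x\<rfloor>\<bar>\<close>. Since
  \<open>jb x\<close> and \<open>jbZ \<lfloor>x\<rfloor>\<close> agree up to the factor \<open>1 + n\<close>, the extension lies in \<open>L(p,s)\<close>
  with norm controlled by the \<open>l(p,s)\<close> norm of \<open>a\<close>. If \<open>x\<close> lies in the upper half of its
  unit cell and \<open>y\<close> in the lower half of its cell, then \<open>\<lfloor>x - y\<rfloor> = \<lfloor>x\<rfloor> - \<lfloor>y\<rfloor>\<close>; hence the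
  convolution of two extensions at such an \<open>x\<close> is at least \<open>2^-n\<close> times the discrete
  convolution of \<open>\<bar>a\<bar>\<close> and \<open>\<bar>b\<bar>\<close> at \<open>\<lfloor>x\<rfloor>\<close>. As the upper half-cells have measure \<open>2^-n\<close>,
  the \<open>l(q,s)\<close> norm of the discrete convolution is bounded by a multiple of the \<open>L(q,s)\<close> norm
  of the continuous one, and the hypothesis applies.\<close>

definition vec_floor :: "real^'n \<Rightarrow> int^'n" where
  "vec_floor x = (\<chi> i. \<lfloor>x $ i\<rfloor>)"

definition of_int_vec :: "int^'n \<Rightarrow> real^'n" where
  "of_int_vec k = (\<chi> i. real_of_int (k $ i))"

definition vec_frac :: "real^'n \<Rightarrow> real^'n" where
  "vec_frac x = x - of_int_vec (vec_floor x)"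

abbreviation upper_half_cube :: "(real^'n) set" where
  "upper_half_cube \<equiv> box (\<chi> i. 1/2) (\<chi> i. 1)"

lemma vec_floor_eq_iff:
  "vec_floor x = k \<longleftrightarrow> (\<forall>i. real_of_int (k $ i) \<le> x $ i \<and> x $ i < real_of_int (k $ i) + 1)"
  unfolding vec_floor_def by (auto simp: vec_eq_iff floor_eq_iff)

lemma vec_frac_nth: "vec_frac x $ i = x $ i - real_of_int \<lfloor>x $ i\<rfloor>"
  by (simp add: vec_frac_def vec_floor_def of_int_vec_def)

lemma vec_frac_nth_bounds: "0 \<le> vec_frac x $ i" "vec_frac x $ i < 1"
  by (simp_all add: vec_frac_nth) linarith

lemma measurable_vec_floor [measurable]: "vec_floor \<in> borel \<rightarrow>\<^sub>M count_space UNIV"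
proof (subst measurable_count_space_eq2_countable, safe)
  fix k :: "int^'n"
  have "vec_floor -` {k} = {x. \<forall>i. real_of_int (k $ i) \<le> x $ i \<and> x $ i < real_of_int (k $ i) + 1}"
    by (simp only: vimage_def vec_floor_eq_iff[symmetric]) auto
  also have "\<dots> \<in> sets borel" by measurable
  finally show "vec_floor -` {k} \<inter> space borel \<in> sets borel" by simp
qed auto

lemma sets_vec_floor_vimage [measurable]: "vec_floor -` {k} \<in> sets borel"
  using measurable_sets[OF measurable_vec_floor, of "{k}"] by simp

lemma norm_vec_frac_le: "norm (vec_frac x) \<le> real CARD('n)" for x :: "real^'n"
proof -
  have "norm (vec_frac x) \<le> (\<Sum>i\<in>UNIV. \<bar>vec_frac x $ i\<bar>)" by (rule norm_le_l1_cart)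
  also have "\<dots> \<le> (\<Sum>i\<in>(UNIV::'n set). 1)"
    using vec_frac_nth_bounds[of x] by (intro sum_mono) (simp add: less_imp_le)
  finally show ?thesis by simp
qed

lemma vec_floor_diff:
  assumes "vec_frac x \<in> upper_half_cube" "vec_frac y \<in> box 0 (\<chi> i. 1/2)"
  shows "vec_floor (x - y) = vec_floor x - vec_floor y"
  unfolding vec_floor_eq_iff
proof
  fix i
  have "1/2 < vec_frac x $ i" "vec_frac x $ i < 1" "0 < vec_frac y $ i" "vec_frac y $ i < 1/2"
    using assms by (auto simp: mem_box_cart)
  then show "real_of_int ((vec_floor x - vec_floor y) $ i) \<le> (x - y) $ i \<and>
      (x - y) $ i < real_of_int ((vec_floor x - vec_floor y) $ i) + 1"
    by (simp add: vec_frac_nth vec_floor_def)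
qed

lemma vec_floor_in_upper_half_cell:
  fixes x :: "real^'n"
  assumes "x \<in> box (of_int_vec k + (\<chi> i. 1/2)) (of_int_vec k + (\<chi> i. 1))"
  shows "vec_floor x = k" "vec_frac x \<in> upper_half_cube"
proof -
  have "real_of_int (k $ i) + 1/2 < x $ i \<and> x $ i < real_of_int (k $ i) + 1" for i
    using assms by (simp add: mem_box_cart of_int_vec_def)
  then show k: "vec_floor x = k"
    unfolding vec_floor_eq_iff by (meson less_add_same_cancel1 less_imp_le order.strict_trans
        zero_less_divide_1_iff zero_less_numeral)
  show "vec_frac x \<in> upper_half_cube"
    using assms by (simp add: vec_frac_def k mem_box_cart of_int_vec_def algebra_simps)
qed

lemma jb_ge_1: "1 \<le> jb x"
  unfolding jb_def by simp

lemma jb_pos: "0 < jb x"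
  using jb_ge_1[of x] by linarith

lemma jb_triangle: "jb x \<le> jb y + norm (x - y)"
proof -
  have "jb x \<le> sqrt ((1 + 0)\<^sup>2 + (norm y + norm (x - y))\<^sup>2)"
    unfolding jb_def using norm_triangle_sub[of x y] by (simp add: power_mono)
  also have "\<dots> \<le> sqrt (1\<^sup>2 + (norm y)\<^sup>2) + sqrt (0\<^sup>2 + (norm (x - y))\<^sup>2)"
    by (rule real_sqrt_sum_squares_triangle_ineq)
  finally show ?thesis by (simp add: jb_def)
qed

lemma jb_le_mult: assumes "norm (x - y) \<le> d" shows "jb x \<le> (1 + d) * jb y"
proof -
  have "0 \<le> d" using assms norm_ge_zero order_trans by blast
  have "jb x \<le> jb y + d * 1" using jb_triangle[of x y] assms by linarith
  also have "\<dots> \<le> jb y + d * jb y"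
    using jb_ge_1[of y] \<open>0 \<le> d\<close> by (intro add_left_mono mult_left_mono)
  finally show ?thesis by (simp add: algebra_simps)
qed

lemma jb_powr_le: assumes "norm (x - y) \<le> d" shows "jb x powr t \<le> (1 + d) powr \<bar>t\<bar> * jb y powr t"
proof -
  have d: "0 \<le> d" using assms norm_ge_zero order_trans by blast
  show ?thesis
  proof (cases "0 \<le> t")
    case True
    have "jb x powr t \<le> ((1 + d) * jb y) powr t"
      using jb_le_mult[OF assms] True jb_pos[of x] by (intro powr_mono2) auto
    then show ?thesis
      using True d jb_pos[of y] by (simp add: powr_mult)
  next
    case False
    have "jb y \<le> (1 + d) * jb x"
      using jb_le_mult[of y x d] assms by (simp add: norm_minus_commute)
    then have "jb y / (1 + d) \<le> jb x"
      using d by (simp add: divide_le_eq mult.commute)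
    then have "jb x powr t \<le> (jb y / (1 + d)) powr t"
      using False jb_pos[of y] d by (intro powr_mono2') auto
    then show ?thesis
      using False d jb_pos[of y] by (simp add: powr_divide powr_minus_divide)
  qed
qed

lemma jbZ_eq_jb_of_int_vec: "jbZ k = jb (of_int_vec k)"
  unfolding jbZ_def of_int_vec_def ..

lemma jb_powr_le_jbZ_vec_floor:
  "jb x powr t \<le> (1 + real CARD('n)) powr \<bar>t\<bar> * jbZ (vec_floor x) powr t" for x :: "real^'n"
  unfolding jbZ_eq_jb_of_int_vec using norm_vec_frac_le[of x]
  by (intro jb_powr_le) (simp add: vec_frac_def)

lemma jbZ_vec_floor_powr_le_jb:
  "jbZ (vec_floor x) powr t \<le> (1 + real CARD('n)) powr \<bar>t\<bar> * jb x powr t" for x :: "real^'n"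
  unfolding jbZ_eq_jb_of_int_vec using norm_vec_frac_le[of x]
  by (intro jb_powr_le) (simp add: vec_frac_def norm_minus_commute)

lemma borel_measurable_jb [measurable]: "jb \<in> borel_measurable lebesgue"
proof -
  have "jb \<in> borel_measurable borel" unfolding jb_def by measurable
  then have "jb \<in> borel_measurable lborel"
    by simp
  then show ?thesis
    by (rule measurable_completion)
qed

lemma nn_integral_count_space_single:
  fixes c :: "'a \<Rightarrow> ennreal"
  assumes "\<And>k. k \<noteq> m \<Longrightarrow> c k = 0"
  shows "(\<integral>\<^sup>+ k. c k \<partial>count_space UNIV) = c m"
  using nn_integral_count_space'[of "{m}" UNIV c] assms by auto

lemma inner_const_vec_Basis: "b \<in> Basis \<Longrightarrow> (\<chi> i. c) \<bullet> b = (c::real)"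
  by (auto simp: Basis_vec_def inner_axis)

lemma emeasure_vec_floor_vimage_le: "emeasure lborel (vec_floor -` {k}) \<le> 1"
proof -
  have "vec_floor -` {k} \<subseteq> cbox (of_int_vec k) (of_int_vec k + (\<chi> i. 1))"
    using vec_floor_eq_iff by (fastforce simp: mem_box_cart of_int_vec_def less_imp_le)
  then have "emeasure lborel (vec_floor -` {k}) \<le> emeasure lborel (cbox (of_int_vec k) (of_int_vec k + (\<chi> i. 1)))"
    by (intro emeasure_mono) auto
  also have "\<dots> = 1"
    by (subst emeasure_lborel_cbox_eq) (auto simp: inner_const_vec_Basis inner_add_left)
  finally show ?thesis .
qed

lemma nn_integral_vec_floor_le:
  fixes c :: "int^'n \<Rightarrow> ennreal"
  shows "(\<integral>\<^sup>+ x. c (vec_floor x) \<partial>lborel) \<le> (\<integral>\<^sup>+ k. c k \<partial>count_space UNIV)"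
proof -
  have "(\<integral>\<^sup>+ x. c (vec_floor x) \<partial>lborel)
      = (\<integral>\<^sup>+ x. (\<integral>\<^sup>+ k. c k * indicator (vec_floor -` {k}) x \<partial>count_space UNIV) \<partial>lborel)"
  proof (intro nn_integral_cong)
    fix x :: "real^'n"
    show "c (vec_floor x) = (\<integral>\<^sup>+ k. c k * indicator (vec_floor -` {k}) x \<partial>count_space UNIV)"
      by (subst nn_integral_count_space_single[where m = "vec_floor x"]) (auto simp: indicator_def)
  qed
  also have "\<dots> = (\<integral>\<^sup>+ k. (\<integral>\<^sup>+ x. c k * indicator (vec_floor -` {k}) x \<partial>lborel) \<partial>count_space UNIV)"
    by (rule nn_integral_count_space_nn_integral) measurable
  also have "\<dots> = (\<integral>\<^sup>+ k. c k * emeasure lborel (vec_floor -` {k}) \<partial>count_space UNIV)"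
    by (intro nn_integral_cong nn_integral_cmult_indicator) simp
  also have "\<dots> \<le> (\<integral>\<^sup>+ k. c k \<partial>count_space UNIV)"
    by (intro nn_integral_mono) (use emeasure_vec_floor_vimage_le mult_left_mono in fastforce)
  finally show ?thesis .
qed

lemma nn_integral_vec_floor_box:
  fixes c :: "int^'n \<Rightarrow> ennreal" and l u :: "real^'n"
  assumes "\<And>i. 0 \<le> l $ i" "\<And>i. u $ i \<le> 1"
  shows "(\<integral>\<^sup>+ x. c (vec_floor x) * indicator (box l u) (vec_frac x) \<partial>lborel)
      = (\<integral>\<^sup>+ k. c k \<partial>count_space UNIV) * emeasure lborel (box l u)"
proof -
  have cell: "x \<in> box (of_int_vec k + l) (of_int_vec k + u) \<longleftrightarrow> vec_floor x = k \<and> vec_frac x \<in> box l u"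
    for x k
  proof
    assume x: "x \<in> box (of_int_vec k + l) (of_int_vec k + u)"
    then have "vec_floor x = k"
      using assms unfolding vec_floor_eq_iff by (auto simp: mem_box_cart of_int_vec_def) (smt (verit))+
    with x show "vec_floor x = k \<and> vec_frac x \<in> box l u"
      by (auto simp: vec_frac_def mem_box_cart algebra_simps)
  qed (auto simp: vec_frac_def mem_box_cart algebra_simps)
  have "(\<integral>\<^sup>+ x. c (vec_floor x) * indicator (box l u) (vec_frac x) \<partial>lborel)
     = (\<integral>\<^sup>+ x. (\<integral>\<^sup>+ k. c k * indicator (box (of_int_vec k + l) (of_int_vec k + u)) x \<partial>count_space UNIV) \<partial>lborel)"
  proof (intro nn_integral_cong)
    fix x :: "real^'n"
    show "c (vec_floor x) * indicator (box l u) (vec_frac x)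
      = (\<integral>\<^sup>+ k. c k * indicator (box (of_int_vec k + l) (of_int_vec k + u)) x \<partial>count_space UNIV)"
      by (subst nn_integral_count_space_single[where m = "vec_floor x"]) (auto simp: indicator_def cell)
  qed
  also have "\<dots> = (\<integral>\<^sup>+ k. (\<integral>\<^sup>+ x. c k * indicator (box (of_int_vec k + l) (of_int_vec k + u)) x \<partial>lborel) \<partial>count_space UNIV)"
    by (rule nn_integral_count_space_nn_integral) auto
  also have "\<dots> = (\<integral>\<^sup>+ k. c k * emeasure lborel (box l u) \<partial>count_space UNIV)"
    by (intro nn_integral_cong, subst nn_integral_cmult_indicator)
      (auto simp: emeasure_lborel_box_eq inner_add_left)
  also have "\<dots> = (\<integral>\<^sup>+ k. c k \<partial>count_space UNIV) * emeasure lborel (box l u)"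
    by (rule nn_integral_multc) simp
  finally show ?thesis .
qed

lemma AE_lebesgue_ex_in_box:
  fixes l u :: "real^'n"
  assumes "AE x in lebesgue. P x" "\<And>i. l $ i < u $ i"
  shows "\<exists>x\<in>box l u. P x"
proof (rule ccontr)
  assume "\<not> ?thesis"
  then have "AE x in lebesgue. x \<notin> box l u"
    using assms(1) by (auto elim: eventually_mono)
  then have "emeasure lborel (box l u) = 0"
    by (subst (asm) AE_iff_measurable[of "box l u"]) auto
  moreover have "emeasure lborel (box l u) > 0"
    using assms(2) by (subst emeasure_lborel_box_eq)
      (auto simp: less_imp_le Basis_vec_def inner_axis intro!: prod_pos)
  ultimately show False by simp
qed

lemma AE_lebesgue_ex_in_upper_half_cell:
  fixes k :: "int^'n"
  assumes "AE x in lebesgue. P x"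
  shows "\<exists>x. vec_floor x = k \<and> vec_frac x \<in> upper_half_cube \<and> P x"
  using AE_lebesgue_ex_in_box[OF assms, of "of_int_vec k + (\<chi> i. 1/2)" "of_int_vec k + (\<chi> i. 1)"]
    vec_floor_in_upper_half_cell by fastforce

lemma nn_integral_count_space_eq_infsum:
  fixes c :: "'a \<Rightarrow> real"
  assumes "\<And>k. 0 \<le> c k" "c summable_on UNIV"
  shows "(\<integral>\<^sup>+ k. ennreal (c k) \<partial>count_space UNIV) = ennreal (infsum c UNIV)"
proof -
  have "Infinite_Set_Sum.abs_summable_on c UNIV"
    using assms abs_summable_equivalent[of c UNIV] by simp
  then show ?thesis using assms by (simp add: nn_integral_conv_infsetsum infsetsum_infsum)
qed

lemma summable_on_iff_nn_integral_count_space_finite: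
  fixes c :: "'a \<Rightarrow> real"
  assumes "\<And>k. 0 \<le> c k"
  shows "c summable_on UNIV \<longleftrightarrow> (\<integral>\<^sup>+ k. ennreal (c k) \<partial>count_space UNIV) < \<infinity>"
proof
  assume "(\<integral>\<^sup>+ k. ennreal (c k) \<partial>count_space UNIV) < \<infinity>"
  then have "integrable (count_space UNIV) c"
    using assms by (intro integrableI_bounded) auto
  then have "Infinite_Set_Sum.abs_summable_on c UNIV" by (simp add: abs_summable_on_def)
  then show "c summable_on UNIV"
    using assms abs_summable_equivalent[of c UNIV] by simp
qed (simp add: nn_integral_count_space_eq_infsum assms)

lemma infsum_eq_enn2real_nn_integral_count_space:
  fixes c :: "'a \<Rightarrow> real"
  assumes "\<And>k. 0 \<le> c k"
  shows "infsum c UNIV = enn2real (\<integral>\<^sup>+ k. ennreal (c k) \<partial>count_space UNIV)"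
proof (cases "c summable_on UNIV")
  case True
  then show ?thesis using assms by (simp add: nn_integral_count_space_eq_infsum infsum_nonneg)
next
  case False
  then have "(\<integral>\<^sup>+ k. ennreal (c k) \<partial>count_space UNIV) = \<infinity>"
    using summable_on_iff_nn_integral_count_space_finite[of c] assms by (simp add: less_top[symmetric])
  then show ?thesis using False by (simp add: infsum_not_exists)
qed

lemma inl_finite_iff:
  assumes "p \<noteq> \<infinity>"
  shows "inl p s a \<longleftrightarrow>
    (\<integral>\<^sup>+ k. ennreal (cmod (a k) powr enn2real p * jbZ k powr (enn2real p * s)) \<partial>count_space UNIV) < \<infinity>"
  using assms by (simp add: inl_def summable_on_iff_nn_integral_count_space_finite)

lemma norml_finite_eq:
  assumes "p \<noteq> \<infinity>"
  shows "norml p s a = enn2real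
    (\<integral>\<^sup>+ k. ennreal (cmod (a k) powr enn2real p * jbZ k powr (enn2real p * s)) \<partial>count_space UNIV)
    powr (1 / enn2real p)"
  using assms by (simp add: norml_def infsum_eq_enn2real_nn_integral_count_space)

lemma enn2real_powr_le_if_le_cmult:
  fixes X Y :: ennreal
  assumes "X \<le> ennreal W * Y" "Y < \<infinity>" "0 \<le> W" "0 < p"
  shows "X < \<infinity>" "enn2real X powr (1 / p) \<le> W powr (1 / p) * enn2real Y powr (1 / p)"
proof -
  show "X < \<infinity>"
    using assms(1,2) by (auto simp: ennreal_mult_less_top intro: le_less_trans)
  have "enn2real X \<le> enn2real (ennreal W * Y)"
    using assms(1,2) by (intro enn2real_mono) (auto simp: ennreal_mult_less_top)
  then have "enn2real X \<le> W * enn2real Y"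
    using assms(3) by (simp add: enn2real_mult)
  then have "enn2real X powr (1 / p) \<le> (W * enn2real Y) powr (1 / p)"
    using assms(4) by (intro powr_mono2) auto
  then show "enn2real X powr (1 / p) \<le> W powr (1 / p) * enn2real Y powr (1 / p)"
    using assms(3) by (simp add: powr_mult)
qed

lemma one_le_enn2real: "1 \<le> p \<Longrightarrow> p \<noteq> \<infinity> \<Longrightarrow> 1 \<le> enn2real p"
  using enn2real_mono[of 1 p] by (simp add: less_top)

lemma AE_bound_nonneg:
  fixes h :: "real^'n \<Rightarrow> real"
  assumes "AE x in lebesgue. h x \<le> C" "\<And>x. 0 \<le> h x"
  shows "0 \<le> C"
proof -
  obtain x where "h x \<le> C"
    using AE_lebesgue_ex_in_box[OF assms(1), of 0 "\<chi> i. 1"] by auto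
  then show ?thesis using assms(2)[of x] by linarith
qed

lemma normL_nonneg:
  fixes f :: "real^'n \<Rightarrow> complex"
  assumes "inL p s f"
  shows "0 \<le> normL p s f"
proof (cases "p = \<infinity>")
  case True
  then have "{C. AE x in lebesgue. cmod (f x) * jb x powr s \<le> C} \<noteq> {}"
    using assms unfolding inL_def by auto
  then have "0 \<le> Inf {C. AE x in lebesgue. cmod (f x) * jb x powr s \<le> C}"
    by (rule cInf_greatest) (auto elim: AE_bound_nonneg)
  then show ?thesis using True unfolding normL_def by simp
qed (simp add: normL_def)

lemma AE_le_normL_infinity:
  fixes f :: "real^'n \<Rightarrow> complex"
  assumes "inL \<infinity> s f"
  shows "AE x in lebesgue. cmod (f x) * jb x powr s \<le> normL \<infinity> s f"
proof -
  define S where "S = {C. AE x in lebesgue. cmod (f x) * jb x powr s \<le> C}"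
  have "S \<noteq> {}" using assms unfolding inL_def S_def by auto
  then have "\<exists>C\<in>S. C < Inf S + inverse (real (Suc k))" for k
    by (intro cInf_lessD) auto
  then obtain C where C: "\<And>k. C k \<in> S" "\<And>k. C k < Inf S + inverse (real (Suc k))"
    by metis
  have "AE x in lebesgue. \<forall>k. cmod (f x) * jb x powr s \<le> C k"
    using C(1) unfolding S_def by (subst AE_all_countable) auto
  then have "AE x in lebesgue. cmod (f x) * jb x powr s \<le> Inf S"
  proof (rule eventually_mono)
    fix x assume "\<forall>k. cmod (f x) * jb x powr s \<le> C k"
    then have "\<forall>k. cmod (f x) * jb x powr s \<le> Inf S + inverse (real (Suc k))"
      using C(2) by (meson less_imp_le order_trans)
    then show "cmod (f x) * jb x powr s \<le> Inf S"
      by (intro LIMSEQ_le_const[OF LIMSEQ_inverse_real_of_nat_add]) auto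
  qed
  then show ?thesis unfolding normL_def S_def by simp
qed

text \<open>Only the modulus of \<open>a\<close> is extended, so that the convolution integrand of two extensions is
  nonnegative and dominates the terms of the discrete convolution.\<close>
definition lattice_step :: "(int^'n \<Rightarrow> complex) \<Rightarrow> real^'n \<Rightarrow> complex" where
  "lattice_step a x = complex_of_real (cmod (a (vec_floor x)))"

lemma borel_measurable_lattice_step: "lattice_step a \<in> borel_measurable lebesgue"
proof -
  have "lattice_step a \<in> borel_measurable borel"
    unfolding lattice_step_def by (rule measurable_compose[OF measurable_vec_floor]) simp
  then have "lattice_step a \<in> borel_measurable lborel"
    by simp
  then show ?thesis
    by (rule measurable_completion)
qed

lemma lattice_step_in_L_infinity:
  fixes a :: "int^'n \<Rightarrow> complex"
  assumes "inl \<infinity> s a"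
  shows "inL \<infinity> s (lattice_step a)"
    and "normL \<infinity> s (lattice_step a) \<le> (1 + real CARD('n)) powr \<bar>s\<bar> * norml \<infinity> s a"
proof -
  define B where "B = (SUP k. cmod (a k) * jbZ k powr s)"
  have B: "cmod (a k) * jbZ k powr s \<le> B" for k
    unfolding B_def by (rule cSUP_upper[OF UNIV_I]) (use assms in \<open>simp add: inl_def\<close>)
  have "cmod (a (vec_floor x)) * jb x powr s \<le> (1 + real CARD('n)) powr \<bar>s\<bar> * B" for x
  proof -
    have "cmod (a (vec_floor x)) * jb x powr s
        \<le> cmod (a (vec_floor x)) * ((1 + real CARD('n)) powr \<bar>s\<bar> * jbZ (vec_floor x) powr s)"
      by (intro mult_left_mono jb_powr_le_jbZ_vec_floor) simp
    also have "\<dots> = (1 + real CARD('n)) powr \<bar>s\<bar> * (cmod (a (vec_floor x)) * jbZ (vec_floor x) powr s)"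
      by (simp add: ac_simps)
    also have "\<dots> \<le> (1 + real CARD('n)) powr \<bar>s\<bar> * B"
      by (intro mult_left_mono B) simp
    finally show ?thesis .
  qed
  then have AE: "AE x in lebesgue. cmod (lattice_step a x) * jb x powr s \<le> (1 + real CARD('n)) powr \<bar>s\<bar> * B"
    by (simp add: lattice_step_def)
  then show "inL \<infinity> s (lattice_step a)"
    using borel_measurable_lattice_step by (auto simp: inL_def)
  have "bdd_below {C. AE x in lebesgue. cmod (lattice_step a x) * jb x powr s \<le> C}"
    by (rule bdd_belowI[of _ 0]) (auto elim: AE_bound_nonneg)
  then show "normL \<infinity> s (lattice_step a) \<le> (1 + real CARD('n)) powr \<bar>s\<bar> * norml \<infinity> s a"
    using AE unfolding normL_def norml_def B_def by (auto intro: cInf_lower)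
qed

lemma lattice_step_in_L_finite:
  fixes a :: "int^'n \<Rightarrow> complex"
  assumes "1 \<le> p" "p \<noteq> \<infinity>" "inl p s a"
  shows "inL p s (lattice_step a)"
    and "normL p s (lattice_step a) \<le> (1 + real CARD('n)) powr \<bar>s\<bar> * norml p s a"
proof -
  define r where "r = enn2real p"
  have r: "1 \<le> r" unfolding r_def using assms(1,2) by (rule one_le_enn2real)
  define W where "W = (1 + real CARD('n)) powr \<bar>r * s\<bar>"
  define c where "c k = cmod (a k) powr r * jbZ k powr (r * s)" for k
  define X where "X = (\<integral>\<^sup>+ x. ennreal (cmod (lattice_step a x) powr r * jb x powr (r * s)) \<partial>lebesgue)"
  define Y where "Y = (\<integral>\<^sup>+ k. ennreal (c k) \<partial>count_space UNIV)"
  have pointwise: "cmod (lattice_step a x) powr r * jb x powr (r * s) \<le> W * c (vec_floor x)" for x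
    using jb_powr_le_jbZ_vec_floor[of x "r * s"]
      mult_left_mono[of _ _ "cmod (a (vec_floor x)) powr r"]
    unfolding W_def c_def lattice_step_def by (simp add: mult.left_commute)
  have "X = (\<integral>\<^sup>+ x. ennreal (cmod (lattice_step a x) powr r * jb x powr (r * s)) \<partial>lborel)"
    unfolding X_def by (rule nn_integral_completion)
  also have "\<dots> \<le> (\<integral>\<^sup>+ x. ennreal W * ennreal (c (vec_floor x)) \<partial>lborel)"
  proof (intro nn_integral_mono)
    fix x
    have "ennreal (cmod (lattice_step a x) powr r * jb x powr (r * s)) \<le> ennreal (W * c (vec_floor x))"
      by (rule ennreal_leI[OF pointwise])
    then show "ennreal (cmod (lattice_step a x) powr r * jb x powr (r * s)) \<le> ennreal W * ennreal (c (vec_floor x))"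
      by (simp add: W_def c_def ennreal_mult)
  qed
  also have "\<dots> = ennreal W * (\<integral>\<^sup>+ x. ennreal (c (vec_floor x)) \<partial>lborel)"
    by (intro nn_integral_cmult) (simp add: measurable_compose[OF measurable_vec_floor])
  also have "\<dots> \<le> ennreal W * Y"
    unfolding Y_def by (intro mult_left_mono nn_integral_vec_floor_le) simp
  finally have XY: "X \<le> ennreal W * Y" .
  have Y: "Y < \<infinity>"
    using assms(2,3) unfolding Y_def c_def r_def by (simp add: inl_finite_iff)
  have W: "0 \<le> W" "W powr (1 / r) = (1 + real CARD('n)) powr \<bar>s\<bar>"
    using r by (simp_all add: W_def powr_powr abs_mult)
  show "inL p s (lattice_step a)"
    using enn2real_powr_le_if_le_cmult(1)[OF XY Y W(1), of r] r assms(2) borel_measurable_lattice_step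
    by (simp add: inL_def X_def r_def)
  show "normL p s (lattice_step a) \<le> (1 + real CARD('n)) powr \<bar>s\<bar> * norml p s a"
  proof -
    have "normL p s (lattice_step a) = enn2real X powr (1 / r)"
      using assms(2) by (simp add: normL_def X_def r_def)
    moreover have "norml p s a = enn2real Y powr (1 / r)"
      using assms(2) by (simp add: norml_finite_eq Y_def c_def r_def)
    moreover have "enn2real X powr (1 / r) \<le> W powr (1 / r) * enn2real Y powr (1 / r)"
      using r by (intro enn2real_powr_le_if_le_cmult(2)[OF XY Y W(1)]) simp
    ultimately show ?thesis
      unfolding W(2) by (simp only:)
  qed
qed

lemma lattice_step_in_L:
  fixes a :: "int^'n \<Rightarrow> complex"
  assumes "1 \<le> p" "inl p s a"
  shows "inL p s (lattice_step a)"
    and "normL p s (lattice_step a) \<le> (1 + real CARD('n)) powr \<bar>s\<bar> * norml p s a"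
  using assms lattice_step_in_L_infinity lattice_step_in_L_finite by (cases "p = \<infinity>"; blast)+

definition convZ_abs :: "(int^'n \<Rightarrow> complex) \<Rightarrow> (int^'n \<Rightarrow> complex) \<Rightarrow> int^'n \<Rightarrow> ennreal" where
  "convZ_abs a b k = (\<integral>\<^sup>+ j. ennreal (cmod (a (k - j)) * cmod (b j)) \<partial>count_space UNIV)"

lemma convZ_abs_finiteD:
  assumes "convZ_abs a b k < \<infinity>"
  shows "(\<lambda>j. a (k - j) * b j) summable_on UNIV" "cmod (convZ a b k) \<le> enn2real (convZ_abs a b k)"
proof -
  have "(\<lambda>j. cmod (a (k - j)) * cmod (b j)) summable_on UNIV"
    using assms unfolding convZ_abs_def by (simp add: summable_on_iff_nn_integral_count_space_finite)
  then have norm_summable: "(\<lambda>j. norm (a (k - j) * b j)) summable_on UNIV"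
    by (simp add: norm_mult)
  then show "(\<lambda>j. a (k - j) * b j) summable_on UNIV"
    by (rule abs_summable_summable)
  have "cmod (convZ a b k) \<le> (\<Sum>\<^sub>\<infinity>j. norm (a (k - j) * b j))"
    unfolding convZ_def using norm_summable by (rule norm_infsum_bound)
  also have "\<dots> = enn2real (convZ_abs a b k)"
    unfolding convZ_abs_def by (simp add: norm_mult infsum_eq_enn2real_nn_integral_count_space)
  finally show "cmod (convZ a b k) \<le> enn2real (convZ_abs a b k)" .
qed

lemma convZ_abs_le_convR:
  fixes a b :: "int^'n \<Rightarrow> complex" and x :: "real^'n"
  assumes integrable: "integrable lebesgue (\<lambda>y. lattice_step a (x - y) * lattice_step b y)"
    and x: "vec_frac x \<in> upper_half_cube"
  shows "convZ_abs a b (vec_floor x) * ennreal ((1/2) ^ CARD('n))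
    \<le> ennreal (cmod (convR (lattice_step a) (lattice_step b) x))"
proof -
  define \<phi> where "\<phi> y = cmod (a (vec_floor (x - y))) * cmod (b (vec_floor y))" for y
  have eq: "(\<lambda>y. lattice_step a (x - y) * lattice_step b y) = (\<lambda>y. complex_of_real (\<phi> y))"
    by (auto simp: lattice_step_def \<phi>_def)
  have "integrable lebesgue \<phi>"
    using integrable unfolding eq complex_of_real_integrable_eq .
  have "emeasure lborel (box (0::real^'n) (\<chi> i. 1/2)) = ennreal ((1/2) ^ CARD('n))"
    by (simp add: emeasure_lborel_box_eq inner_const_vec_Basis)
  then have "convZ_abs a b (vec_floor x) * ennreal ((1/2) ^ CARD('n))
      = (\<integral>\<^sup>+ y. ennreal (cmod (a (vec_floor x - vec_floor y)) * cmod (b (vec_floor y)))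
                 * indicator (box 0 (\<chi> i. 1/2)) (vec_frac y) \<partial>lborel)"
    unfolding convZ_abs_def
    by (subst nn_integral_vec_floor_box[where c = "\<lambda>j. ennreal (cmod (a (vec_floor x - j)) * cmod (b j))"])
      simp_all
  also have "\<dots> \<le> (\<integral>\<^sup>+ y. ennreal (\<phi> y) \<partial>lborel)"
    by (intro nn_integral_mono) (auto simp: \<phi>_def indicator_def vec_floor_diff[OF x])
  also have "\<dots> = (\<integral>\<^sup>+ y. ennreal (\<phi> y) \<partial>lebesgue)"
    by (rule nn_integral_completion[symmetric])
  also have "\<dots> = ennreal (integral\<^sup>L lebesgue \<phi>)"
    using \<open>integrable lebesgue \<phi>\<close> by (rule nn_integral_eq_integral) (simp add: \<phi>_def)
  also have "\<dots> \<le> ennreal (cmod (convR (lattice_step a) (lattice_step b) x))"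
  proof -
    have "convR (lattice_step a) (lattice_step b) x = complex_of_real (integral\<^sup>L lebesgue \<phi>)"
      unfolding convR_def eq by simp
    then show ?thesis by (intro ennreal_leI) simp
  qed
  finally show ?thesis .
qed

lemma convZ_dominated_by_convR:
  fixes a b :: "int^'n \<Rightarrow> complex"
  assumes "AE x in lebesgue. integrable lebesgue (\<lambda>y. lattice_step a (x - y) * lattice_step b y)"
  shows "\<forall>k. (\<lambda>j. a (k - j) * b j) summable_on UNIV"
    and "AE x in lebesgue. vec_frac x \<in> upper_half_cube \<longrightarrow>
      cmod (convZ a b (vec_floor x)) \<le> 2 ^ CARD('n) * cmod (convR (lattice_step a) (lattice_step b) x)"
proof -
  have finite_bound: "convZ_abs a b (vec_floor x) < \<infinity> \<and>
      enn2real (convZ_abs a b (vec_floor x)) \<le> 2 ^ CARD('n) * cmod (convR (lattice_step a) (lattice_step b) x)"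
    if "integrable lebesgue (\<lambda>y. lattice_step a (x - y) * lattice_step b y)"
      "vec_frac x \<in> upper_half_cube" for x
  proof -
    have le: "convZ_abs a b (vec_floor x) * ennreal ((1/2) ^ CARD('n))
        \<le> ennreal (cmod (convR (lattice_step a) (lattice_step b) x))"
      using convZ_abs_le_convR[OF that] .
    then have fin: "convZ_abs a b (vec_floor x) < \<infinity>"
      by (cases "convZ_abs a b (vec_floor x)") (auto simp: ennreal_mult_top top_unique)
    have "enn2real (convZ_abs a b (vec_floor x)) * (1/2) ^ CARD('n)
        \<le> cmod (convR (lattice_step a) (lattice_step b) x)"
      using enn2real_mono[OF le] by (simp add: enn2real_mult)
    with fin show ?thesis by (simp add: field_simps power_one_over)
  qed
  show "\<forall>k. (\<lambda>j. a (k - j) * b j) summable_on UNIV"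
  proof
    fix k :: "int^'n"
    obtain x where "vec_floor x = k" "vec_frac x \<in> upper_half_cube"
      "integrable lebesgue (\<lambda>y. lattice_step a (x - y) * lattice_step b y)"
      using AE_lebesgue_ex_in_upper_half_cell[OF assms] by blast
    then show "(\<lambda>j. a (k - j) * b j) summable_on UNIV"
      using finite_bound convZ_abs_finiteD(1) by blast
  qed
  show "AE x in lebesgue. vec_frac x \<in> upper_half_cube \<longrightarrow>
      cmod (convZ a b (vec_floor x)) \<le> 2 ^ CARD('n) * cmod (convR (lattice_step a) (lattice_step b) x)"
    using assms by (rule eventually_mono)
      (use finite_bound convZ_abs_finiteD(2) order_trans in blast)
qed

lemma inl_infinity_if_dominated_on_upper_half_cells:
  fixes c :: "int^'n \<Rightarrow> complex" and h :: "real^'n \<Rightarrow> complex"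
  assumes "0 \<le> K" "inL \<infinity> s h"
    and dominated: "AE x in lebesgue. vec_frac x \<in> upper_half_cube \<longrightarrow>
      cmod (c (vec_floor x)) \<le> K * cmod (h x)"
  shows "inl \<infinity> s c"
    and "norml \<infinity> s c \<le> K * (1 + real CARD('n)) powr \<bar>s\<bar> * normL \<infinity> s h"
proof -
  define E where "E = (1 + real CARD('n)) powr \<bar>s\<bar>"
  have bound: "cmod (c k) * jbZ k powr s \<le> K * E * normL \<infinity> s h" for k
  proof -
    obtain x where x: "vec_floor x = k" "vec_frac x \<in> upper_half_cube"
      and cx: "vec_frac x \<in> upper_half_cube \<longrightarrow> cmod (c (vec_floor x)) \<le> K * cmod (h x)"
      and hx: "cmod (h x) * jb x powr s \<le> normL \<infinity> s h"
      using AE_lebesgue_ex_in_upper_half_cell[OF AE_conjI[OF dominated AE_le_normL_infinity[OF assms(2)]]]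
      by blast
    have "cmod (c k) * jbZ k powr s \<le> (K * cmod (h x)) * (E * jb x powr s)"
      using cx x jbZ_vec_floor_powr_le_jb[of x s] assms(1) unfolding E_def
      by (intro mult_mono) auto
    also have "\<dots> = K * E * (cmod (h x) * jb x powr s)"
      by (simp add: ac_simps)
    also have "\<dots> \<le> K * E * normL \<infinity> s h"
      using hx assms(1) by (intro mult_left_mono) (auto simp: E_def)
    finally show ?thesis .
  qed
  show "inl \<infinity> s c"
    unfolding inl_def using bdd_aboveI2[where f = "\<lambda>k. cmod (c k) * jbZ k powr s", OF bound] by simp
  have "norml \<infinity> s c = (SUP k. cmod (c k) * jbZ k powr s)"
    by (simp add: norml_def)
  also have "\<dots> \<le> K * E * normL \<infinity> s h"
    by (rule cSUP_least) (use bound in auto)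
  finally show "norml \<infinity> s c \<le> K * (1 + real CARD('n)) powr \<bar>s\<bar> * normL \<infinity> s h"
    by (simp add: E_def)
qed

lemma inl_finite_if_dominated_on_upper_half_cells:
  fixes c :: "int^'n \<Rightarrow> complex" and h :: "real^'n \<Rightarrow> complex"
  assumes "0 \<le> K" "1 \<le> q" "q \<noteq> \<infinity>" "inL q s h"
    and dominated: "AE x in lebesgue. vec_frac x \<in> upper_half_cube \<longrightarrow>
      cmod (c (vec_floor x)) \<le> K * cmod (h x)"
  shows "inl q s c"
    and "norml q s c \<le> 2 ^ CARD('n) * K * (1 + real CARD('n)) powr \<bar>s\<bar> * normL q s h"
proof -
  define r where "r = enn2real q"
  have r: "1 \<le> r" unfolding r_def using assms(2,3) by (rule one_le_enn2real)
  define P :: real where "P = 2 ^ CARD('n)"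
  define E where "E = (1 + real CARD('n)) powr \<bar>s\<bar>"
  define d where "d k = cmod (c k) powr r * jbZ k powr (r * s)" for k
  define g where "g x = cmod (h x) powr r * jb x powr (r * s)" for x
  define D where "D = (\<integral>\<^sup>+ k. ennreal (d k) \<partial>count_space UNIV)"
  define Y where "Y = (\<integral>\<^sup>+ x. ennreal (g x) \<partial>lebesgue)"
  have E: "E powr r = (1 + real CARD('n)) powr \<bar>r * s\<bar>"
    using r by (simp add: E_def powr_powr abs_mult mult.commute)
  have pointwise: "d (vec_floor x) \<le> K powr r * E powr r * g x"
    if "cmod (c (vec_floor x)) \<le> K * cmod (h x)" for x
  proof -
    have "d (vec_floor x) \<le> (K * cmod (h x)) powr r * (E powr r * jb x powr (r * s))"
      unfolding d_def E using that r jbZ_vec_floor_powr_le_jb[of x "r * s"]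
      by (intro mult_mono powr_mono2) auto
    also have "\<dots> = K powr r * E powr r * g x"
      using assms(1) by (simp add: g_def powr_mult ac_simps)
    finally show ?thesis .
  qed
  have "D * ennreal (1 / P)
      = (\<integral>\<^sup>+ x. ennreal (d (vec_floor x)) * indicator upper_half_cube (vec_frac x) \<partial>lborel)"
    by (subst nn_integral_vec_floor_box)
      (simp_all add: D_def P_def emeasure_lborel_box_eq inner_const_vec_Basis inner_diff_left power_one_over)
  also have "\<dots> = (\<integral>\<^sup>+ x. ennreal (d (vec_floor x)) * indicator upper_half_cube (vec_frac x) \<partial>lebesgue)"
    by (rule nn_integral_completion[symmetric])
  also have "\<dots> \<le> (\<integral>\<^sup>+ x. ennreal (K powr r * E powr r) * ennreal (g x) \<partial>lebesgue)"
    using dominated by (intro nn_integral_mono_AE)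
      (auto elim!: eventually_mono dest: pointwise simp: indicator_def g_def ennreal_mult'[symmetric] ennreal_leI)
  also have "\<dots> = ennreal (K powr r * E powr r) * Y"
    unfolding Y_def using assms(4) by (intro nn_integral_cmult) (auto simp: g_def inL_def)
  finally have "D * ennreal (1 / P) * ennreal P \<le> ennreal (K powr r * E powr r) * Y * ennreal P"
    by (rule mult_right_mono) simp
  then have DY: "D \<le> ennreal (P * K powr r * E powr r) * Y"
    by (simp add: P_def ennreal_mult'[symmetric] mult.assoc mult.commute mult.left_commute)
  have Y: "Y < \<infinity>" using assms(3,4) by (simp add: inL_def Y_def g_def r_def)
  have W: "0 \<le> P * K powr r * E powr r" by (simp add: P_def)
  show "inl q s c"
    using enn2real_powr_le_if_le_cmult(1)[OF DY Y W, of r] r assms(3)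
    by (simp add: inl_finite_iff D_def d_def r_def)
  have "norml q s c \<le> (P * K powr r * E powr r) powr (1 / r) * normL q s h"
    using enn2real_powr_le_if_le_cmult(2)[OF DY Y W, of r] r assms(3)
    by (simp add: norml_finite_eq normL_def D_def d_def Y_def g_def r_def)
  also have "(P * K powr r * E powr r) powr (1 / r) = P powr (1 / r) * K * E"
    using r assms(1) by (simp add: P_def E_def powr_mult powr_powr)
  also have "\<dots> * normL q s h \<le> P * K * E * normL q s h"
  proof -
    have "P powr (1 / r) \<le> P powr 1"
      using r by (intro powr_mono) (auto simp: P_def)
    then show ?thesis
      using assms(1) normL_nonneg[OF assms(4)] by (intro mult_right_mono) (auto simp: P_def E_def)
  qed
  finally show "norml q s c \<le> 2 ^ CARD('n) * K * (1 + real CARD('n)) powr \<bar>s\<bar> * normL q s h"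
    by (simp add: P_def E_def)
qed

lemma inl_if_dominated_on_upper_half_cells:
  fixes c :: "int^'n \<Rightarrow> complex" and h :: "real^'n \<Rightarrow> complex"
  assumes "0 \<le> K" "1 \<le> q" "inL q s h"
    and "AE x in lebesgue. vec_frac x \<in> upper_half_cube \<longrightarrow>
      cmod (c (vec_floor x)) \<le> K * cmod (h x)"
  shows "inl q s c"
    and "norml q s c \<le> 2 ^ CARD('n) * K * (1 + real CARD('n)) powr \<bar>s\<bar> * normL q s h"
proof -
  have "inl q s c \<and> norml q s c \<le> 2 ^ CARD('n) * K * (1 + real CARD('n)) powr \<bar>s\<bar> * normL q s h"
  proof (cases "q = \<infinity>")
    case True
    have M: "0 \<le> K * (1 + real CARD('n)) powr \<bar>s\<bar> * normL q s h"
      using assms(1) normL_nonneg[OF assms(3)] by simp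
    have "K * (1 + real CARD('n)) powr \<bar>s\<bar> * normL q s h
        \<le> 2 ^ CARD('n) * (K * (1 + real CARD('n)) powr \<bar>s\<bar> * normL q s h)"
      using mult_right_mono[OF one_le_power[of "2::real" "CARD('n)"] M] by simp
    then show ?thesis
      using inl_infinity_if_dominated_on_upper_half_cells[OF assms(1) assms(3,4)[unfolded True]] True
      by (simp add: mult.assoc)
  next
    case False
    then show ?thesis using assms inl_finite_if_dominated_on_upper_half_cells by blast
  qed
  then show "inl q s c" "norml q s c \<le> 2 ^ CARD('n) * K * (1 + real CARD('n)) powr \<bar>s\<bar> * normL q s h"
    by auto
qed

lemma inl_convZ_if_convR_lattice_step:
  fixes a b :: "int^'n \<Rightarrow> complex"
  assumes "1 \<le> q"
    and "AE x in lebesgue. integrable lebesgue (\<lambda>y. lattice_step a (x - y) * lattice_step b y)"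
    and "inL q s (convR (lattice_step a) (lattice_step b))"
  shows "\<forall>k. (\<lambda>j. a (k - j) * b j) summable_on UNIV"
    and "inl q s (convZ a b)"
    and "norml q s (convZ a b) \<le> 2 ^ CARD('n) * 2 ^ CARD('n) * (1 + real CARD('n)) powr \<bar>s\<bar>
      * normL q s (convR (lattice_step a) (lattice_step b))"
  using convZ_dominated_by_convR[OF assms(2)]
    inl_if_dominated_on_upper_half_cells[OF zero_le_power[OF zero_le_numeral] assms(1,3)]
  by blast+

lemma mult_le_max_zero_mult:
  fixes C x y x' y' :: real
  assumes "0 \<le> x" "x \<le> x'" "0 \<le> y" "y \<le> y'"
  shows "C * x * y \<le> max C 0 * x' * y'"
proof -
  have "C * x * y \<le> max C 0 * x * y"
    using assms by (intro mult_right_mono) auto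
  also have "\<dots> \<le> max C 0 * x' * y'"
    using assms by (intro mult_mono mult_left_mono) auto
  finally show ?thesis .
qed

theorem proposition4p1:
  fixes q q1 q2 :: ennreal and s s1 s2 :: real
  assumes "1 \<le> q" and "1 \<le> q1" and "1 \<le> q2"
    and "L_conv_incl TYPE('n::finite) q1 s1 q2 s2 q s"
  shows "l_conv_incl TYPE('n) q1 s1 q2 s2 q s"
proof -
  obtain C where C: "\<forall>(f::real^'n \<Rightarrow> complex) g. inL q1 s1 f \<longrightarrow> inL q2 s2 g \<longrightarrow>
      (AE x in lebesgue. integrable lebesgue (\<lambda>y. f (x - y) * g y)) \<and>
      inL q s (convR f g) \<and> normL q s (convR f g) \<le> C * normL q1 s1 f * normL q2 s2 g"
    using assms(4) unfolding L_conv_incl_def by blast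
  define E where "E t = (1 + real CARD('n)) powr \<bar>t\<bar>" for t
  define P :: real where "P = 2 ^ CARD('n) * 2 ^ CARD('n) * E s"
  show ?thesis unfolding l_conv_incl_def
  proof (intro exI[of _ "P * max C 0 * E s1 * E s2"] allI impI)
    fix a b :: "int^'n \<Rightarrow> complex"
    assume "inl q1 s1 a" "inl q2 s2 b"
    note f = lattice_step_in_L[OF assms(2) this(1), folded E_def]
      and g = lattice_step_in_L[OF assms(3) this(2), folded E_def]
    have conv: "AE x in lebesgue. integrable lebesgue (\<lambda>y. lattice_step a (x - y) * lattice_step b y)"
      "inL q s (convR (lattice_step a) (lattice_step b))"
      "normL q s (convR (lattice_step a) (lattice_step b))
        \<le> C * normL q1 s1 (lattice_step a) * normL q2 s2 (lattice_step b)"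
      using C f(1) g(1) by blast+
    note discrete = inl_convZ_if_convR_lattice_step[OF assms(1) conv(1,2), folded E_def, folded P_def]
    have "norml q s (convZ a b) \<le> P * normL q s (convR (lattice_step a) (lattice_step b))"
      by (rule discrete(3))
    also have "\<dots> \<le> P * (C * normL q1 s1 (lattice_step a) * normL q2 s2 (lattice_step b))"
      using conv(3) by (intro mult_left_mono) (auto simp: P_def E_def)
    also have "\<dots> \<le> P * (max C 0 * (E s1 * norml q1 s1 a) * (E s2 * norml q2 s2 b))"
      using f g by (intro mult_left_mono mult_le_max_zero_mult normL_nonneg) (auto simp: P_def E_def)
    finally show "(\<forall>k. (\<lambda>j. a (k - j) * b j) summable_on UNIV) \<and> inl q s (convZ a b) \<and>
        norml q s (convZ a b) \<le> P * max C 0 * E s1 * E s2 * norml q1 s1 a * norml q2 s2 b"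
      using discrete(1,2) by (simp add: ac_simps)
  qed
qed

end
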